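(* Let $\alpha$ be a sentence, $\phi,\psi,\beta$ formulas, and $\Gamma$ a set of formulas. If $\Gamma,\alpha\vdash\phi$ and $\Gamma,\beta\vdash\psi$, then $\Gamma,\alpha\vee\beta\vdash\phi\vee\psi$.
   Context: Fix a countable predicate language $\mathcal L$ consisting of variables, constant symbols and predicate symbols (so terms are just variables and constants), with connectives $\to$, $\&$, the propositional constant $0$ and quantifiers $\forall,\exists$. Abbreviations: $\phi\wedge\psi$ is $\phi\&(\phi\to\psi)$; $\phi\vee\psi$ is $((\phi\to\psi)\to\psi)\wedge((\psi\to\phi)\to\phi)$; $\neg\phi$ is $\phi\to 0$; $1$ is $0\to 0$; $\beta^n$ is $\beta\&\cdots\&\beta$ ($n$ factors). $\phi(x/t)$ denotes the result of substituting the term $t$ for the free occurrences of $x$ in $\phi$. A sentence is a formula with no free variables; a theory is any set of formulas. Hájek's basic predicate logic BL$\forall$ has the axiom schemata (A1) $(\phi\to\psi)\to((\psi\to\chi)\to(\phi\to\chi))$; (A2) $(\phi\&\psi)\to\phi$; (A3) $(\phi\&\psi)\to(\psi\&\phi)$; (A4) $(\phi\&(\phi\to\psi))\to(\psi\&(\psi\to\phi))$; (A5) $(\phi\to(\psi\to\chi))\to((\phi\&\psi)\to\chi)$; (A6) $((\phi\&\psi)\to\chi)\to(\phi\to(\psi\to\chi))$; (A7) $((\phi\to\psi)\to\chi)\to(((\psi\to\phi)\to\chi)\to\chi)$; (A8) $0\to\phi$; ($\forall$1) $\forall x\phi\to\phi(x/t)$ and ($\exists$1) $\phi(x/t)\to\exists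 x\phi$, for $t$ substitutable for $x$ in $\phi$; ($\forall$2) $\forall x(\phi\to\psi)\to(\phi\to\forall x\psi)$, ($\exists$2) $\forall x(\psi\to\phi)\to(\exists x\psi\to\phi)$ and (Lin) $\forall x(\psi\vee\phi)\to((\forall x\psi)\vee\phi)$, each with $x$ not free in $\phi$; its rules are modus ponens (from $\phi$ and $\phi\to\psi$ infer $\psi$) and generalization (from $\phi$ infer $\forall x\phi$). The logic $\vdash$ extends BL$\forall$ by the axiom schema (RC) $\forall x(\chi\&\chi)\to((\forall x\chi)\&(\forall x\chi))$ for every formula $\chi$, and the infinitary rule (Inf): from all of $\phi\vee(\alpha\to\beta^n)$, $n\in\mathbb N$, infer $\phi\vee(\alpha\to(\alpha\&\beta))$, where $\phi,\alpha,\beta$ are sentences. A proof from $\Gamma$ is a sequence $(\phi_i)_{i\le\xi}$ indexed by the ordinals up to some ordinal $\xi$ such that each $\phi_i$ is an axiom of BL$\forall$, an instance of (RC), a member of $\Gamma$, or is obtained from formulas in $\{\phi_j: j<i\}$ by modus ponens, generalization, or (Inf). $\Gamma\vdash\phi$ means there is a proof from $\Gamma$ whose last member is $\phi$; $\Gamma,\psi\vdash\phi$ means $\Gamma\cup\{\psi\}\vdash\phi$. *)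

theory Defs
  imports Main "HOL-Library.Countable"
begin

datatype 'c trm = Var nat | Const 'c

datatype ('c, 'p) fm =
    Atom 'p "'c trm list"
  | Imp "('c, 'p) fm" "('c, 'p) fm"
  | SConj "('c, 'p) fm" "('c, 'p) fm"
  | Zero
  | All nat "('c, 'p) fm"
  | Ex nat "('c, 'p) fm"

fun tvars :: "'c trm \<Rightarrow> nat set" where
  "tvars (Var x) = {x}"
| "tvars (Const c) = {}"

fun fv :: "('c, 'p) fm \<Rightarrow> nat set" where
  "fv (Atom P ts) = (\<Union>t\<in>set ts. tvars t)"
| "fv (Imp a b) = fv a \<union> fv b"
| "fv (SConj a b) = fv a \<union> fv b"
| "fv Zero = {}"
| "fv (All x a) = fv a - {x}"
| "fv (Ex x a) = fv a - {x}"

definition sentence :: "('c, 'p) fm \<Rightarrow> bool" where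
  "sentence \<phi> \<longleftrightarrow> fv \<phi> = {}"

fun tsubst :: "nat \<Rightarrow> 'c trm \<Rightarrow> 'c trm \<Rightarrow> 'c trm" where
  "tsubst x t (Var y) = (if y = x then t else Var y)"
| "tsubst x t (Const c) = Const c"

fun subst :: "nat \<Rightarrow> 'c trm \<Rightarrow> ('c, 'p) fm \<Rightarrow> ('c, 'p) fm" where
  "subst x t (Atom P ts) = Atom P (map (tsubst x t) ts)"
| "subst x t (Imp a b) = Imp (subst x t a) (subst x t b)"
| "subst x t (SConj a b) = SConj (subst x t a) (subst x t b)"
| "subst x t Zero = Zero"
| "subst x t (All y a) = (if y = x then All y a else All y (subst x t a))"
| "subst x t (Ex y a) = (if y = x then Ex y a else Ex y (subst x t a))"

fun substitutable :: "'c trm \<Rightarrow> nat \<Rightarrow> ('c, 'p) fm \<Rightarrow> bool" where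
  "substitutable t x (Atom P ts) = True"
| "substitutable t x (Imp a b) = (substitutable t x a \<and> substitutable t x b)"
| "substitutable t x (SConj a b) = (substitutable t x a \<and> substitutable t x b)"
| "substitutable t x Zero = True"
| "substitutable t x (All y a) =
     (x \<notin> fv (All y a) \<or> (y \<notin> tvars t \<and> substitutable t x a))"
| "substitutable t x (Ex y a) =
     (x \<notin> fv (Ex y a) \<or> (y \<notin> tvars t \<and> substitutable t x a))"

definition Wedge :: "('c, 'p) fm \<Rightarrow> ('c, 'p) fm \<Rightarrow> ('c, 'p) fm" where
  "Wedge a b = SConj a (Imp a b)"

definition Vee :: "('c, 'p) fm \<Rightarrow> ('c, 'p) fm \<Rightarrow> ('c, 'p) fm" where
  "Vee a b = Wedge (Imp (Imp a b) b) (Imp (Imp b a) a)"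

definition Neg :: "('c, 'p) fm \<Rightarrow> ('c, 'p) fm" where
  "Neg a = Imp a Zero"

definition One :: "('c, 'p) fm" where
  "One = Imp Zero Zero"

text \<open>fpow n b is b \& ... \& b with n factors (meaningful for n \<ge> 1; n = 0 gives One).\<close>
fun fpow :: "nat \<Rightarrow> ('c, 'p) fm \<Rightarrow> ('c, 'p) fm" where
  "fpow 0 b = One"
| "fpow (Suc 0) b = b"
| "fpow (Suc (Suc n)) b = SConj b (fpow (Suc n) b)"

inductive BLax :: "('c, 'p) fm \<Rightarrow> bool" where
  A1: "BLax (Imp (Imp \<phi> \<psi>) (Imp (Imp \<psi> \<chi>) (Imp \<phi> \<chi>)))"
| A2: "BLax (Imp (SConj \<phi> \<psi>) \<phi>)"
| A3: "BLax (Imp (SConj \<phi> \<psi>) (SConj \<psi> \<phi>))"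
| A4: "BLax (Imp (SConj \<phi> (Imp \<phi> \<psi>)) (SConj \<psi> (Imp \<psi> \<phi>)))"
| A5: "BLax (Imp (Imp \<phi> (Imp \<psi> \<chi>)) (Imp (SConj \<phi> \<psi>) \<chi>))"
| A6: "BLax (Imp (Imp (SConj \<phi> \<psi>) \<chi>) (Imp \<phi> (Imp \<psi> \<chi>)))"
| A7: "BLax (Imp (Imp (Imp \<phi> \<psi>) \<chi>) (Imp (Imp (Imp \<psi> \<phi>) \<chi>) \<chi>))"
| A8: "BLax (Imp Zero \<phi>)"
| All1: "substitutable t x \<phi> \<Longrightarrow> BLax (Imp (All x \<phi>) (subst x t \<phi>))"
| Ex1: "substitutable t x \<phi> \<Longrightarrow> BLax (Imp (subst x t \<phi>) (Ex x \<phi>))"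
| All2: "x \<notin> fv \<phi> \<Longrightarrow> BLax (Imp (All x (Imp \<phi> \<psi>)) (Imp \<phi> (All x \<psi>)))"
| Ex2: "x \<notin> fv \<phi> \<Longrightarrow> BLax (Imp (All x (Imp \<psi> \<phi>)) (Imp (Ex x \<psi>) \<phi>))"
| Lin: "x \<notin> fv \<phi> \<Longrightarrow> BLax (Imp (All x (Vee \<psi> \<phi>)) (Vee (All x \<psi>) \<phi>))"

text \<open>This is exactly
  the set of last members of (transfinite, ordinal-indexed) proofs from \<Gamma>.\<close>
inductive deriv :: "('c, 'p) fm set \<Rightarrow> ('c, 'p) fm \<Rightarrow> bool" where
  ax: "BLax \<phi> \<Longrightarrow> deriv \<Gamma> \<phi>"
| RC: "deriv \<Gamma> (Imp (All x (SConj \<chi> \<chi>)) (SConj (All x \<chi>) (All x \<chi>)))"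
| hyp: "\<phi> \<in> \<Gamma> \<Longrightarrow> deriv \<Gamma> \<phi>"
| MP: "deriv \<Gamma> \<phi> \<Longrightarrow> deriv \<Gamma> (Imp \<phi> \<psi>) \<Longrightarrow> deriv \<Gamma> \<psi>"
| Gen: "deriv \<Gamma> \<phi> \<Longrightarrow> deriv \<Gamma> (All x \<phi>)"
| Inf: "sentence \<phi> \<Longrightarrow> sentence \<alpha> \<Longrightarrow> sentence \<beta> \<Longrightarrow>
        (\<forall>n\<ge>1. deriv \<Gamma> (Vee \<phi> (Imp \<alpha> (fpow n \<beta>)))) \<Longrightarrow>
        deriv \<Gamma> (Vee \<phi> (Imp \<alpha> (SConj \<alpha> \<beta>)))"

end

theory Submission
  imports Defs
begin

text \<open>The key fact is a proof-by-cases rule with a side disjunct: if \<open>\<Gamma>, A \<turnstile> F\<close> and \<open>C\<close>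
  is a sentence, then \<open>\<Gamma>, A \<or> C \<turnstile> F \<or> C\<close>. It is proved by induction on derivations, pushing
  \<open>\<or> C\<close> through every rule; generalization survives by (Lin) and (Inf) by a rearrangement of
  disjuncts, both because \<open>C\<close> has no free variables. Applying it once with side disjunct \<open>\<alpha>\<close>
  gives \<open>\<Gamma>, \<alpha> \<or> \<beta> \<turnstile> \<psi> \<or> \<alpha>\<close>; generalizing turns \<psi> into its universal closure \<open>\<forall>\<psi>\<close>, a sentence,
  which can then serve as the side disjunct of the second application, giving
  \<open>\<Gamma>, \<alpha> \<or> \<beta> \<turnstile> \<phi> \<or> \<forall>\<psi>\<close>, and finally \<open>\<forall>\<psi> \<rightarrow> \<psi>\<close>.\<close>

lemmas deriv_A1 = BLax.A1[THEN deriv.ax]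
lemmas deriv_A2 = BLax.A2[THEN deriv.ax]
lemmas deriv_A3 = BLax.A3[THEN deriv.ax]
lemmas deriv_A4 = BLax.A4[THEN deriv.ax]
lemmas deriv_A5 = BLax.A5[THEN deriv.ax]
lemmas deriv_A6 = BLax.A6[THEN deriv.ax]
lemmas deriv_A7 = BLax.A7[THEN deriv.ax]
lemmas deriv_A8 = BLax.A8[THEN deriv.ax]

lemma imp_trans: "deriv \<Gamma> (Imp a b) \<Longrightarrow> deriv \<Gamma> (Imp b c) \<Longrightarrow> deriv \<Gamma> (Imp a c)"
  by (rule deriv.MP[OF _ deriv.MP[OF _ deriv_A1]])

lemma imp_swap: "deriv \<Gamma> (Imp a (Imp b c)) \<Longrightarrow> deriv \<Gamma> (Imp b (Imp a c))"
proof -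
  assume "deriv \<Gamma> (Imp a (Imp b c))"
  then have "deriv \<Gamma> (Imp (SConj a b) c)" by (rule deriv.MP[OF _ deriv_A5])
  then have "deriv \<Gamma> (Imp (SConj b a) c)" by (rule imp_trans[OF deriv_A3])
  then show ?thesis by (rule deriv.MP[OF _ deriv_A6])
qed

lemma imp_K: "deriv \<Gamma> (Imp a (Imp b a))"
  by (rule deriv.MP[OF deriv_A2 deriv_A6])

lemma imp_refl: "deriv \<Gamma> (Imp a a)"
  by (rule deriv.MP[OF deriv_A8 imp_swap[OF imp_K]])

lemma SConj_pair: "deriv \<Gamma> (Imp a (Imp b (SConj a b)))"
  by (rule deriv.MP[OF imp_refl deriv_A6])

lemma imp_mono_right: "deriv \<Gamma> (Imp b c) \<Longrightarrow> deriv \<Gamma> (Imp (Imp a b) (Imp a c))"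
  by (rule deriv.MP[OF _ imp_swap[OF deriv_A1]])

lemma SConj_mono_right: "deriv \<Gamma> (Imp b c) \<Longrightarrow> deriv \<Gamma> (Imp (SConj a b) (SConj a c))"
proof -
  assume "deriv \<Gamma> (Imp b c)"
  then have "deriv \<Gamma> (Imp (Imp c (SConj a c)) (Imp b (SConj a c)))"
    by (rule deriv.MP[OF _ deriv_A1])
  then have "deriv \<Gamma> (Imp a (Imp b (SConj a c)))" by (rule imp_trans[OF SConj_pair])
  then show ?thesis by (rule deriv.MP[OF _ deriv_A5])
qed

lemma Wedge_elim1: "deriv \<Gamma> (Imp (Wedge a b) a)"
  unfolding Wedge_def by (rule deriv_A2)

lemma Wedge_elim2: "deriv \<Gamma> (Imp (Wedge a b) b)"
  unfolding Wedge_def by (rule imp_trans[OF deriv_A4 deriv_A2])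

lemma Wedge_intro:
  assumes "deriv \<Gamma> (Imp z a)" and "deriv \<Gamma> (Imp z b)"
  shows "deriv \<Gamma> (Imp z (Wedge a b))"
proof -
  have "deriv \<Gamma> (Imp z (SConj z (Imp z a)))"
    by (rule deriv.MP[OF assms(1) imp_swap[OF SConj_pair]])
  moreover have "deriv \<Gamma> (Imp (SConj a (Imp a z)) (SConj a (Imp a b)))"
    by (rule SConj_mono_right[OF imp_mono_right[OF assms(2)]])
  ultimately show ?thesis
    unfolding Wedge_def by (rule imp_trans[OF imp_trans[OF _ deriv_A4]])
qed

lemma Vee_intro1: "deriv \<Gamma> (Imp a (Vee a b))"
  unfolding Vee_def by (rule Wedge_intro[OF imp_swap[OF imp_refl] imp_K])

lemma Vee_intro2: "deriv \<Gamma> (Imp b (Vee a b))"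
  unfolding Vee_def by (rule Wedge_intro[OF imp_K imp_swap[OF imp_refl]])

text \<open>Prelinearity (A7) splits into the cases \<open>a \<rightarrow> b\<close> and \<open>b \<rightarrow> a\<close>; in each, one conjunct
  of the \<open>\<or>\<close> yields the larger disjunct.\<close>
lemma Vee_elim:
  assumes a: "deriv \<Gamma> (Imp a c)" and b: "deriv \<Gamma> (Imp b c)"
  shows "deriv \<Gamma> (Imp (Vee a b) c)"
proof -
  have "deriv \<Gamma> (Imp (Imp a b) (Imp (Vee a b) b))"
    unfolding Vee_def by (rule imp_swap[OF Wedge_elim1])
  then have case_ab: "deriv \<Gamma> (Imp (Imp a b) (Imp (Vee a b) c))"
    by (rule imp_trans[OF _ imp_mono_right[OF b]])
  have "deriv \<Gamma> (Imp (Imp b a) (Imp (Vee a b) a))"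
    unfolding Vee_def by (rule imp_swap[OF Wedge_elim2])
  then have case_ba: "deriv \<Gamma> (Imp (Imp b a) (Imp (Vee a b) c))"
    by (rule imp_trans[OF _ imp_mono_right[OF a]])
  show ?thesis by (rule deriv.MP[OF case_ba deriv.MP[OF case_ab deriv_A7]])
qed

lemma Vee_comm: "deriv \<Gamma> (Imp (Vee a b) (Vee b a))"
  by (rule Vee_elim[OF Vee_intro2 Vee_intro1])

lemma Vee_mono_right: "deriv \<Gamma> (Imp b c) \<Longrightarrow> deriv \<Gamma> (Imp (Vee a b) (Vee a c))"
  by (rule Vee_elim[OF Vee_intro1 imp_trans[OF _ Vee_intro2]])

lemma Vee_exchange: "deriv \<Gamma> (Imp (Vee (Vee a b) c) (Vee (Vee a c) b))"
  by (rule Vee_elim[OF Vee_elim[OF imp_trans[OF Vee_intro1 Vee_intro1] Vee_intro2]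
        imp_trans[OF Vee_intro2 Vee_intro1]])

lemma Vee_MP: "deriv \<Gamma> (Imp (Vee a c) (Imp (Vee (Imp a b) c) (Vee b c)))"
proof -
  have c_case: "deriv \<Gamma> (Imp c (Imp d (Vee b c)))" for d
    by (rule imp_trans[OF Vee_intro2 imp_K])
  have "deriv \<Gamma> (Imp (Vee (Imp a b) c) (Imp a (Vee b c)))"
    by (rule Vee_elim[OF imp_mono_right[OF Vee_intro1] c_case])
  then show ?thesis by (rule Vee_elim[OF imp_swap c_case])
qed

lemma fv_Vee [simp]: "fv (Vee a b) = fv a \<union> fv b"
  by (auto simp: Vee_def Wedge_def)

lemma deriv_mono: "deriv \<Gamma> F \<Longrightarrow> \<Gamma> \<subseteq> \<Delta> \<Longrightarrow> deriv \<Delta> F"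
proof (induction rule: deriv.induct)
  case (Inf \<phi> \<alpha> \<beta> \<Gamma>)
  then show ?case by (simp add: deriv.Inf)
qed (auto intro: deriv.intros)

lemma deriv_cut:
  assumes "deriv (insert A \<Gamma>) F" and "deriv \<Gamma> A"
  shows "deriv \<Gamma> F"
  using assms
proof (induction "insert A \<Gamma>" F rule: deriv.induct)
  case (Inf \<phi> \<alpha> \<beta>)
  then show ?case by (simp add: deriv.Inf)
qed (auto intro: deriv.intros)

lemma deriv_Vee_side_sentence:
  assumes "deriv (insert A \<Gamma>) F" and "sentence C"
  shows "deriv (insert (Vee A C) \<Gamma>) (Vee F C)"
  using assms
proof (induction "insert A \<Gamma>" F rule: deriv.induct)
  case (hyp \<phi>)
  then show ?case by (cases "\<phi> = A") (auto intro: deriv.hyp deriv.MP[OF _ Vee_intro1])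
next
  case (MP \<phi> \<psi>)
  then show ?case by (blast intro: deriv.MP[OF _ deriv.MP[OF _ Vee_MP]])
next
  case (Gen \<phi> x)
  then have "x \<notin> fv C" by (simp add: sentence_def)
  then have "deriv (insert (Vee A C) \<Gamma>) (Imp (All x (Vee \<phi> C)) (Vee (All x \<phi>) C))"
    by (intro deriv.ax BLax.Lin)
  then show ?case by (rule deriv.MP[OF deriv.Gen[OF Gen.hyps(2)[OF Gen.prems]]])
next
  case (Inf \<phi> \<alpha> \<beta>)
  then have "deriv (insert (Vee A C) \<Gamma>) (Vee (Vee \<phi> C) (Imp \<alpha> (fpow n \<beta>)))"
    if "n \<ge> 1" for n
    using that by (blast intro: deriv.MP[OF _ Vee_exchange])
  with Inf have "deriv (insert (Vee A C) \<Gamma>) (Vee (Vee \<phi> C) (Imp \<alpha> (SConj \<alpha> \<beta>)))"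
    by (intro deriv.Inf) (auto simp: sentence_def)
  then show ?case by (rule deriv.MP[OF _ Vee_exchange])
qed (auto intro: deriv.intros deriv.MP[OF _ Vee_intro1])

lemma deriv_Vee_left:
  assumes "deriv (insert A \<Gamma>) F" and "sentence C" and "deriv \<Gamma> (Vee A C)"
  shows "deriv \<Gamma> (Vee F C)"
proof (rule deriv_cut[OF _ assms(3)])
  show "deriv (insert (Vee A C) \<Gamma>) (Vee F C)"
    by (rule deriv_mono[OF deriv_Vee_side_sentence[OF assms(1,2)]]) blast
qed

definition Alls :: "nat list \<Rightarrow> ('c, 'p) fm \<Rightarrow> ('c, 'p) fm" where
  "Alls xs \<phi> = foldr All xs \<phi>"

lemma fv_Alls: "fv (Alls xs \<phi>) = fv \<phi> - set xs"
  unfolding Alls_def by (induction xs) auto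

lemma finite_fv: "finite (fv \<phi>)"
proof (induction \<phi>)
  case (Atom P ts)
  have "finite (tvars t)" for t :: "'a trm" by (cases t) auto
  then show ?case by auto
qed auto

lemma sentence_Alls_fv: "set xs = fv \<phi> \<Longrightarrow> sentence (Alls xs \<phi>)"
  by (simp add: sentence_def fv_Alls)

lemma subst_Var_self: "subst x (Var x) \<phi> = \<phi>"
proof (induction \<phi>)
  case (Atom P ts)
  have "tsubst x (Var x) t = t" for t :: "'a trm" by (cases t) auto
  then show ?case by (simp add: map_idI)
qed auto

lemma substitutable_Var_self: "substitutable (Var x) x \<phi>"
  by (induction \<phi>) auto

lemma All_imp_self: "deriv \<Gamma> (Imp (All x \<phi>) \<phi>)"
  using BLax.All1[OF substitutable_Var_self, of x \<phi>]
  by (simp add: subst_Var_self deriv.ax)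

lemma Alls_imp_self: "deriv \<Gamma> (Imp (Alls xs \<phi>) \<phi>)"
  by (induction xs) (auto simp: Alls_def imp_refl intro: imp_trans[OF All_imp_self])

lemma deriv_Vee_Alls:
  assumes "sentence C" and "deriv \<Gamma> (Vee \<phi> C)"
  shows "deriv \<Gamma> (Vee (Alls xs \<phi>) C)"
proof (induction xs)
  case Nil
  then show ?case using assms(2) by (simp add: Alls_def)
next
  case (Cons x xs)
  have "x \<notin> fv C" using assms(1) by (simp add: sentence_def)
  then have "deriv \<Gamma> (Imp (All x (Vee (Alls xs \<phi>) C)) (Vee (All x (Alls xs \<phi>)) C))"
    by (intro deriv.ax BLax.Lin)
  from deriv.MP[OF deriv.Gen[OF Cons.IH] this] show ?case by (simp add: Alls_def)
qed

theorem mainTheorem3: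
  fixes \<Gamma> :: "('c::countable, 'p::countable) fm set"
    and \<alpha> \<phi> \<psi> \<beta> :: "('c, 'p) fm"
  assumes "sentence \<alpha>"
    and "deriv (insert \<alpha> \<Gamma>) \<phi>"
    and "deriv (insert \<beta> \<Gamma>) \<psi>"
  shows "deriv (insert (Vee \<alpha> \<beta>) \<Gamma>) (Vee \<phi> \<psi>)"
proof -
  let ?\<Delta> = "insert (Vee \<alpha> \<beta>) \<Gamma>"
  obtain xs where xs: "set xs = fv \<psi>" using finite_list[OF finite_fv] by blast
  have "deriv ?\<Delta> (Vee \<beta> \<alpha>)" by (rule deriv.MP[OF deriv.hyp Vee_comm]) simp
  moreover have "deriv (insert \<beta> ?\<Delta>) \<psi>" by (rule deriv_mono[OF assms(3)]) blast
  ultimately have "deriv ?\<Delta> (Vee \<psi> \<alpha>)" using assms(1) by (blast intro: deriv_Vee_left)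
  then have "deriv ?\<Delta> (Vee \<alpha> (Alls xs \<psi>))"
    by (rule deriv.MP[OF deriv_Vee_Alls[OF assms(1)] Vee_comm])
  moreover have "deriv (insert \<alpha> ?\<Delta>) \<phi>" by (rule deriv_mono[OF assms(2)]) blast
  ultimately have "deriv ?\<Delta> (Vee \<phi> (Alls xs \<psi>))"
    using sentence_Alls_fv[OF xs] by (blast intro: deriv_Vee_left)
  then show ?thesis by (rule deriv.MP[OF _ Vee_mono_right[OF Alls_imp_self]])
qed

end
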